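(* Fix non-negative integers $t,a,b,c,u,e,f,g$ such that $t\ge 14$, $$10a+6b+3c+u+6e+3f+g\le\binom{t+2}{2},$$ and $(e,f,g)$ is one of the triples $(0,0,0),(0,0,1),(0,0,2),(0,1,0),(0,1,1),(0,1,2),(1,0,0),(1,0,1),(1,0,2),(1,1,0)$. Then $$6a+3b+c+10e+10f+10g\le\binom{t+1}{2}.$$ Moreover, if in addition $e+f+g\le 2$, the same conclusion holds for every $t\ge 12$; and if $e=f=g=0$, the conclusion holds for every $t\ge 3$. *)

theory Defs
  imports Main
begin

end

theory Submission
  imports Defs
begin

(* Write S = 6a+3b+c for the quantity to be bounded and L = 10a+6b+3c for the
   weight in the hypothesis.  Coefficient-wise, 5 S \<le> 3 L.  On the other side,
   5 C(t+1,2) = 3 C(t+2,2) + (t-3)(t+1) for t \<ge> 3.  Hence a budget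
   L + w \<le> C(t+2,2) transfers to S + 10 s \<le> C(t+1,2) as soon as the extra
   demand is covered, i.e. 50 s \<le> 3 w + (t-3)(t+1)  (lemma budget_transfer).
   With w = 6e+3f+g and s = e+f+g this condition reads
   32e + 41f + 47g \<le> (t-3)(t+1).  Over the admissible triples the left side is
   at most 135, and at most 94 when e+f+g \<le> 2 (lemma triple_deficit), while
   (t-3)(t+1) is at least 165, 117, 0 for t \<ge> 14, 12, 3 respectively; the
   three claims of lemma2p6 follow. *)

lemma weight_ratio:
  fixes a b c :: nat
  shows "5 * (6*a + 3*b + c) \<le> 3 * (10*a + 6*b + 3*c)"
  by simp

lemma choose_two_gap:
  fixes t :: nat
  assumes "3 \<le> t"
  shows "5 * ((t + 1) choose 2) = 3 * ((t + 2) choose 2) + (t - 3) * (t + 1)"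
proof -
  obtain k where k: "t = k + 3"
    using assms by (metis add.commute le_Suc_ex numeral_3_eq_3)
  have two_big: "2 * ((t + 2) choose 2) = t*t + 3*t + 2"
    by (simp add: choose_two algebra_simps)
  have two_small: "2 * ((t + 1) choose 2) = t*t + t"
    by (simp add: choose_two algebra_simps)
  have "2 * (5 * ((t + 1) choose 2)) = 2 * (3 * ((t + 2) choose 2) + (t - 3) * (t + 1))"
    unfolding add_mult_distrib2 mult.left_commute[of 2] two_big two_small
    unfolding k by (simp add: algebra_simps)
  then show ?thesis by simp
qed

lemma budget_transfer:
  fixes t a b c u w s :: nat
  assumes budget: "10*a + 6*b + 3*c + u + w \<le> (t + 2) choose 2"
    and t: "3 \<le> t"
    and cover: "50 * s \<le> 3 * w + (t - 3) * (t + 1)"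
  shows "6*a + 3*b + c + 10*s \<le> (t + 1) choose 2"
proof -
  have "5 * (6*a + 3*b + c + 10*s) \<le> 3 * (10*a + 6*b + 3*c) + 50 * s"
    using weight_ratio[of a b c] by simp
  also have "\<dots> \<le> 3 * (10*a + 6*b + 3*c + u + w) + (t - 3) * (t + 1)"
    using cover by simp
  also have "\<dots> \<le> 3 * ((t + 2) choose 2) + (t - 3) * (t + 1)"
    using budget by simp
  also have "\<dots> = 5 * ((t + 1) choose 2)"
    using choose_two_gap[OF t] by simp
  finally show ?thesis by simp
qed

text \<open>The deficit 32e+41f+47g = 50(e+f+g) - 3(6e+3f+g) over the admissible triples.\<close>
lemma triple_deficit:
  fixes e f g :: nat
  assumes "(e, f, g) \<in> {(0,0,0),(0,0,1),(0,0,2),(0,1,0),(0,1,1),(0,1,2),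
                         (1,0,0),(1,0,1),(1,0,2),(1,1,0)}"
  shows "32*e + 41*f + 47*g \<le> 135"
    and "e + f + g \<le> 2 \<Longrightarrow> 32*e + 41*f + 47*g \<le> 94"
  using assms by auto

lemma triple_transfer:
  fixes t a b c u e f g :: nat
  assumes "10*a + 6*b + 3*c + u + 6*e + 3*f + g \<le> (t + 2) choose 2"
    and "3 \<le> t"
    and "32*e + 41*f + 47*g \<le> (t - 3) * (t + 1)"
  shows "6*a + 3*b + c + 10*e + 10*f + 10*g \<le> (t + 1) choose 2"
  using budget_transfer[of a b c u "6*e + 3*f + g" t "e + f + g"] assms
  by (simp add: algebra_simps)

theorem lemma2p6:
  fixes t a b c u e f g :: nat
  assumes hyp: "10*a + 6*b + 3*c + u + 6*e + 3*f + g \<le> (t + 2) choose 2"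
    and trip: "(e, f, g) \<in> {(0,0,0),(0,0,1),(0,0,2),(0,1,0),(0,1,1),(0,1,2),
                             (1,0,0),(1,0,1),(1,0,2),(1,1,0)}"
  shows "(t \<ge> 14 \<longrightarrow> 6*a + 3*b + c + 10*e + 10*f + 10*g \<le> (t + 1) choose 2)
       \<and> (t \<ge> 12 \<and> e + f + g \<le> 2 \<longrightarrow> 6*a + 3*b + c + 10*e + 10*f + 10*g \<le> (t + 1) choose 2)
       \<and> (t \<ge> 3 \<and> e = 0 \<and> f = 0 \<and> g = 0 \<longrightarrow> 6*a + 3*b + c + 10*e + 10*f + 10*g \<le> (t + 1) choose 2)"
proof -
  have "6*a + 3*b + c + 10*e + 10*f + 10*g \<le> (t + 1) choose 2" if t: "14 \<le> t"
  proof -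
    have "(14 - 3) * (14 + 1) \<le> (t - 3) * (t + 1)"
      using t by (intro mult_le_mono) auto
    then show ?thesis
      using triple_transfer[OF hyp] triple_deficit(1)[OF trip] t by simp
  qed
  moreover have "6*a + 3*b + c + 10*e + 10*f + 10*g \<le> (t + 1) choose 2"
    if t: "12 \<le> t" and small: "e + f + g \<le> 2"
  proof -
    have "(12 - 3) * (12 + 1) \<le> (t - 3) * (t + 1)"
      using t by (intro mult_le_mono) auto
    then show ?thesis
      using triple_transfer[OF hyp] triple_deficit(2)[OF trip small] t by simp
  qed
  moreover have "6*a + 3*b + c + 10*e + 10*f + 10*g \<le> (t + 1) choose 2"
    if "3 \<le> t" "e = 0" "f = 0" "g = 0"
    using triple_transfer[OF hyp] that by simp
  ultimately show ?thesis by blast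
qed

end
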